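(* Let $(K\subseteq L,v)$ be a valued field extension. Suppose that every $y\in L$ can be written as $y=x+a$ with $a\in K$ and $x\in L$ such that $|v(x)|>\Gamma_K$. Then the extension $L|K$ is $vs$-defectless.
   Context: $\Gamma_K$ is the value group of $K$ inside $\Gamma_L$; $|v(x)|>\Gamma_K$ means $v(x)>\gamma$ for all $\gamma\in\Gamma_K$ or $v(x)<\gamma$ for all $\gamma\in\Gamma_K$ (with $v(0)=\infty>\Gamma_K$). A set $\{a_1,\dots,a_n\}\subseteq L$ is $K$-valuation independent if $v(\sum_i c_ia_i)=\min_i v(c_ia_i)$ for all $c_i\in K$; $L|K$ is $vs$-defectless if every finitely generated $K$-vector subspace of $L$ is spanned by a $K$-valuation independent set. *)

theory Defs
  imports Main "HOL-Library.Extended"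
begin

definition valuation :: "('b::field \<Rightarrow> 'g::linordered_ab_group_add extended) \<Rightarrow> bool" where
  "valuation v \<longleftrightarrow>
     v 0 = Pinf \<and>
     (\<forall>x. x \<noteq> 0 \<longrightarrow> (\<exists>g. v x = Fin g)) \<and>
     (\<forall>x y. v (x * y) = v x + v y) \<and>
     (\<forall>x y. min (v x) (v y) \<le> v (x + y))"

text \<open>K is a subfield of the field 'b (which plays the role of L).\<close>
definition subfield :: "'b::field set \<Rightarrow> bool" where
  "subfield K \<longleftrightarrow> 0 \<in> K \<and> 1 \<in> K \<and>
     (\<forall>x\<in>K. \<forall>y\<in>K. x + y \<in> K \<and> x * y \<in> K) \<and>
     (\<forall>x\<in>K. - x \<in> K \<and> inverse x \<in> K)"

definition value_group :: "('b::field \<Rightarrow> 'g extended) \<Rightarrow> 'b set \<Rightarrow> 'g set" where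
  "value_group v K = {g. \<exists>a\<in>K. a \<noteq> 0 \<and> v a = Fin g}"

definition abs_val_gt :: "('b::field \<Rightarrow> 'g::linorder extended) \<Rightarrow> 'b set \<Rightarrow> 'b \<Rightarrow> bool" where
  "abs_val_gt v K x \<longleftrightarrow>
     (\<forall>g\<in>value_group v K. Fin g < v x) \<or> (\<forall>g\<in>value_group v K. v x < Fin g)"

definition val_independent ::
  "('b::field \<Rightarrow> 'g::linordered_ab_group_add extended) \<Rightarrow> 'b set \<Rightarrow> 'b set \<Rightarrow> bool" where
  "val_independent v K A \<longleftrightarrow> finite A \<and>
     (\<forall>c. c ` A \<subseteq> K \<longrightarrow>
        v (\<Sum>a\<in>A. c a * a) = Min (insert Pinf ((\<lambda>a. v (c a * a)) ` A)))"

definition Kspan :: "'b::field set \<Rightarrow> 'b set \<Rightarrow> 'b set" where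
  "Kspan K F = {\<Sum>a\<in>S. c a * a | S c. finite S \<and> S \<subseteq> F \<and> c ` S \<subseteq> K}"

definition vs_defectless ::
  "('b::field \<Rightarrow> 'g::linordered_ab_group_add extended) \<Rightarrow> 'b set \<Rightarrow> bool" where
  "vs_defectless v K \<longleftrightarrow>
     (\<forall>F. finite F \<longrightarrow> (\<exists>B. val_independent v K B \<and> Kspan K B = Kspan K F))"

end

(* Induction on a finite generating set. Given a valuation independent set B spanning the same
   space as F and a new element y, it suffices to find u in the span of B such that y - u is
   valuation orthogonal to that span: then B together with y - u is again valuation independent.
   Such a u is found by descent. If v (y + w) > min (v y) (v w) for some w in the span, then
   v y = v w; since v (y / w) = 0 lies in Gamma_K, the decomposition of y / w cannot have its
   first summand below Gamma_K, so there is a in K with v (y / w - a) > Gamma_K. Passing from y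
   to y - a w strictly shrinks the set of b in B with v y <= v b + gamma for some gamma in
   Gamma_K, because the b realising v w drops out. *)

theory Submission
  imports Defs
begin

lemma add_min_eq_min_add:
  fixes x y z :: "'a::{linorder, ordered_ab_semigroup_add}"
  shows "x + min y z = min (x + y) (x + z)"
proof (cases "y \<le> z")
  case True
  then show ?thesis by (simp add: add_left_mono min_absorb1)
next
  case False
  then show ?thesis by (simp add: add_left_mono min_absorb2)
qed

lemma Fin_add_less_cancel:
  fixes x y :: "'a::linordered_ab_group_add extended"
  shows "Fin c + x < Fin c + y \<longleftrightarrow> x < y"
  by (cases x; cases y) auto

lemma val_independent_finite: "val_independent v K B \<Longrightarrow> finite B"
  unfolding val_independent_def by simp

lemma Kspan_mono: "F \<subseteq> G \<Longrightarrow> Kspan K F \<subseteq> Kspan K G"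
  unfolding Kspan_def by blast

lemma sum_in_Kspan: "finite F \<Longrightarrow> c ` F \<subseteq> K \<Longrightarrow> (\<Sum>a\<in>F. c a * a) \<in> Kspan K F"
  unfolding Kspan_def by blast

lemma zero_in_Kspan: "0 \<in> Kspan K F"
  using sum_in_Kspan[of "{}" _ K] Kspan_mono[of "{}" F K] by auto

context
  fixes K :: "'b::field set"
  assumes K: "subfield K"
begin

lemma
  shows subfield_zero: "0 \<in> K"
    and subfield_one: "1 \<in> K"
    and subfield_add: "x \<in> K \<Longrightarrow> y \<in> K \<Longrightarrow> x + y \<in> K"
    and subfield_mult: "x \<in> K \<Longrightarrow> y \<in> K \<Longrightarrow> x * y \<in> K"
    and subfield_uminus: "x \<in> K \<Longrightarrow> - x \<in> K"
    and subfield_inverse: "x \<in> K \<Longrightarrow> inverse x \<in> K"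
  using K unfolding subfield_def by blast+

lemma Kspan_eq_sums:
  assumes F: "finite F"
  shows "Kspan K F = {\<Sum>a\<in>F. c a * a | c. c ` F \<subseteq> K}"
proof
  show "{\<Sum>a\<in>F. c a * a | c. c ` F \<subseteq> K} \<subseteq> Kspan K F"
    using F sum_in_Kspan by blast
  show "Kspan K F \<subseteq> {\<Sum>a\<in>F. c a * a | c. c ` F \<subseteq> K}"
  proof
    fix x assume "x \<in> Kspan K F"
    then obtain S c where S: "S \<subseteq> F" "c ` S \<subseteq> K" and x: "x = (\<Sum>a\<in>S. c a * a)"
      unfolding Kspan_def by blast
    define d where "d a = (if a \<in> S then c a else 0)" for a
    have "d ` F \<subseteq> K" using S subfield_zero unfolding d_def by auto
    moreover have "(\<Sum>a\<in>F. d a * a) = x"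
      unfolding x using sum.mono_neutral_right[OF F S(1), of "\<lambda>a. d a * a"] by (simp add: d_def)
    ultimately show "x \<in> {\<Sum>a\<in>F. c a * a | c. c ` F \<subseteq> K}" by blast
  qed
qed

lemma Kspan_add:
  assumes F: "finite F" and "x \<in> Kspan K F" "y \<in> Kspan K F"
  shows "x + y \<in> Kspan K F"
proof -
  obtain c d where "c ` F \<subseteq> K" "d ` F \<subseteq> K" "x = (\<Sum>a\<in>F. c a * a)" "y = (\<Sum>a\<in>F. d a * a)"
    using assms unfolding Kspan_eq_sums[OF F] by blast
  moreover have "(\<lambda>a. c a + d a) ` F \<subseteq> K"
    using calculation by (auto intro: subfield_add)
  ultimately show ?thesis
    using sum_in_Kspan[OF F, of "\<lambda>a. c a + d a"] by (simp add: sum.distrib distrib_right)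
qed

lemma Kspan_smult:
  assumes F: "finite F" and "x \<in> Kspan K F" "t \<in> K"
  shows "t * x \<in> Kspan K F"
proof -
  obtain c where "c ` F \<subseteq> K" "x = (\<Sum>a\<in>F. c a * a)"
    using assms unfolding Kspan_eq_sums[OF F] by blast
  moreover have "(\<lambda>a. t * c a) ` F \<subseteq> K"
    using calculation \<open>t \<in> K\<close> by (auto intro: subfield_mult)
  ultimately show ?thesis
    using sum_in_Kspan[OF F, of "\<lambda>a. t * c a"] by (simp add: sum_distrib_left mult.assoc)
qed

lemma in_Kspan: "x \<in> F \<Longrightarrow> x \<in> Kspan K F"
  using sum_in_Kspan[of "{x}" "\<lambda>_. 1" K] Kspan_mono[of "{x}" F K] by (auto simp: subfield_one)

lemma Kspan_insert:
  assumes F: "finite F"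
  shows "Kspan K (insert y F) = {t * y + u | t u. t \<in> K \<and> u \<in> Kspan K F}"
proof
  show "Kspan K (insert y F) \<subseteq> {t * y + u | t u. t \<in> K \<and> u \<in> Kspan K F}"
  proof
    fix x assume "x \<in> Kspan K (insert y F)"
    then obtain c where c: "c ` insert y F \<subseteq> K" and x: "x = (\<Sum>a\<in>insert y F. c a * a)"
      unfolding Kspan_eq_sums[OF finite.insertI[OF F]] by blast
    have "x = c y * y + (\<Sum>a\<in>F - {y}. c a * a)"
      unfolding x using F by (simp add: sum.insert_remove)
    moreover have "(\<Sum>a\<in>F - {y}. c a * a) \<in> Kspan K F"
      using sum_in_Kspan[of "F - {y}" c K] Kspan_mono[of "F - {y}" F K] c F by auto
    ultimately show "x \<in> {t * y + u | t u. t \<in> K \<and> u \<in> Kspan K F}" using c by blast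
  qed
  show "{t * y + u | t u. t \<in> K \<and> u \<in> Kspan K F} \<subseteq> Kspan K (insert y F)"
  proof clarify
    fix t u assume "t \<in> K" "u \<in> Kspan K F"
    then show "t * y + u \<in> Kspan K (insert y F)"
      using Kspan_add[OF _ Kspan_smult[OF _ in_Kspan]] Kspan_mono[of F "insert y F" K] F
      by blast
  qed
qed

lemma Kspan_insert_cong:
  assumes "finite F" "finite G" "Kspan K F = Kspan K G"
  shows "Kspan K (insert y F) = Kspan K (insert y G)"
  using assms by (simp add: Kspan_insert)

lemma Kspan_insert_diff:
  assumes F: "finite F" and w: "w \<in> Kspan K F"
  shows "Kspan K (insert (y - w) F) = Kspan K (insert y F)"
proof -
  have shift: "u + s * w \<in> Kspan K F" if "u \<in> Kspan K F" "s \<in> K" for u s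
    using Kspan_add[OF F that(1) Kspan_smult[OF F w that(2)]] .
  have "t * (y - w) + u \<in> Kspan K (insert y F)" if "t \<in> K" "u \<in> Kspan K F" for t u
  proof -
    have "t * (y - w) + u = t * y + (u + (- t) * w)" by (simp add: algebra_simps)
    then show ?thesis
      using that shift[of u "- t"] subfield_uminus unfolding Kspan_insert[OF F] by blast
  qed
  moreover have "t * y + u \<in> Kspan K (insert (y - w) F)" if "t \<in> K" "u \<in> Kspan K F" for t u
  proof -
    have "t * y + u = t * (y - w) + (u + t * w)" by (simp add: algebra_simps)
    then show ?thesis using that shift[of u t] unfolding Kspan_insert[OF F] by blast
  qed
  ultimately show ?thesis unfolding Kspan_insert[OF F, of y] Kspan_insert[OF F, of "y - w"]
    by blast
qed

end

locale valued_field =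
  fixes v :: "'b::field \<Rightarrow> 'g::linordered_ab_group_add extended"
  assumes valuation: "valuation v"
begin

lemma val_zero: "v 0 = Pinf"
  using valuation by (simp add: valuation_def)

lemma val_finite: "x \<noteq> 0 \<Longrightarrow> \<exists>g. v x = Fin g"
  using valuation by (simp add: valuation_def)

lemma val_mult: "v (x * y) = v x + v y"
  using valuation by (simp add: valuation_def)

lemma val_add_ge_min: "min (v x) (v y) \<le> v (x + y)"
  using valuation by (simp add: valuation_def)

lemma val_eq_Pinf_iff: "v x = Pinf \<longleftrightarrow> x = 0"
  using val_finite[of x] val_zero by (cases "x = 0") auto

lemma val_one: "v 1 = 0"
  using val_mult[of 1 1] val_finite[of 1] by (auto simp: zero_extended_def)

lemma val_uminus: "v (- x) = v x"
proof -
  obtain h where h: "v (- 1) = Fin h" using val_finite[of "- 1"] by auto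
  have "Fin (h + h) = 0" using val_mult[of "- 1" "- 1"] h val_one by simp
  then have "v (- 1) = 0" using h by (simp add: zero_extended_def)
  then show ?thesis using val_mult[of "- 1" x] by simp
qed

lemma val_add_eq_left: "v x < v y \<Longrightarrow> v (x + y) = v x"
  using val_add_ge_min[of x y] val_add_ge_min[of "x + y" "- y"]
  by (auto simp: val_uminus min_def split: if_splits)

lemma val_add_eq_min: "v x \<noteq> v y \<Longrightarrow> v (x + y) = min (v x) (v y)"
  using val_add_eq_left[of x y] val_add_eq_left[of y x] by (auto simp: min_def add.commute)

end

locale valued_extension = valued_field v
  for v :: "'b::field \<Rightarrow> 'g::linordered_ab_group_add extended" +
  fixes K :: "'b set"
  assumes subfield: "subfield K"
begin

lemma zero_in_value_group: "0 \<in> value_group v K"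
  using val_one subfield_one[OF subfield] by (force simp: value_group_def zero_extended_def)

lemma diff_in_value_group:
  assumes "g \<in> value_group v K" "h \<in> value_group v K"
  shows "g - h \<in> value_group v K"
proof -
  obtain a b where a: "a \<in> K" "a \<noteq> 0" "v a = Fin g" and b: "b \<in> K" "b \<noteq> 0" "v b = Fin h"
    using assms unfolding value_group_def by blast
  obtain k where k: "v (a / b) = Fin k" using val_finite[of "a / b"] a b by auto
  have "Fin g = Fin (k + h)" using val_mult[of "a / b" b] a b k by simp
  then have "k = g - h" by (simp add: algebra_simps)
  moreover have "a / b \<in> K" "a / b \<noteq> 0"
    using a b subfield by (simp_all add: divide_inverse subfield_mult subfield_inverse)
  ultimately show ?thesis using k unfolding value_group_def by blast
qed

definition val_reach :: "'b set \<Rightarrow> 'b \<Rightarrow> 'b set" where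
  "val_reach B z = {b\<in>B. \<exists>\<gamma>\<in>value_group v K. v z \<le> v b + Fin \<gamma>}"

definition val_orthogonal :: "'b set \<Rightarrow> 'b \<Rightarrow> bool" where
  "val_orthogonal B z \<longleftrightarrow> (\<forall>w\<in>Kspan K B. v (z + w) = min (v z) (v w))"

lemma val_orthogonal_smult:
  assumes B: "finite B" and z: "val_orthogonal B z" and t: "t \<in> K"
  shows "val_orthogonal B (t * z)"
  unfolding val_orthogonal_def
proof
  fix w assume w: "w \<in> Kspan K B"
  show "v (t * z + w) = min (v (t * z)) (v w)"
  proof (cases "t = 0")
    case True
    then show ?thesis by (simp add: val_zero)
  next
    case False
    have "w / t \<in> Kspan K B"
      using Kspan_smult[OF subfield B w subfield_inverse[OF subfield t]] by (simp add: field_simps)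
    then have "v (z + w / t) = min (v z) (v (w / t))" using z unfolding val_orthogonal_def by blast
    moreover have "t * z + w = t * (z + w / t)" "w = t * (w / t)" using False by (simp_all add: field_simps)
    ultimately show ?thesis by (metis val_mult add_min_eq_min_add)
  qed
qed

lemma val_independent_insert:
  assumes B: "val_independent v K B" and z: "val_orthogonal B z"
  shows "val_independent v K (insert z B)"
proof (cases "z \<in> B")
  case True
  then show ?thesis using B by (simp add: insert_absorb)
next
  case False
  have fin: "finite B" using B by (rule val_independent_finite)
  have "v (\<Sum>a\<in>insert z B. c a * a) = Min (insert Pinf ((\<lambda>a. v (c a * a)) ` insert z B))"
    if c: "c ` insert z B \<subseteq> K" for c
  proof -
    let ?S = "\<Sum>a\<in>B. c a * a" and ?f = "\<lambda>a. v (c a * a)"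
    have "v (\<Sum>a\<in>insert z B. c a * a) = min (v (c z * z)) (v ?S)"
      using val_orthogonal_smult[OF fin z, of "c z"] sum_in_Kspan[OF fin, of c K] c fin False
      unfolding val_orthogonal_def by auto
    also have "v ?S = Min (insert Pinf (?f ` B))"
      using B c unfolding val_independent_def by auto
    also have "min (?f z) (Min (insert Pinf (?f ` B))) = Min (insert (?f z) (insert Pinf (?f ` B)))"
      using fin by (intro Min_insert[symmetric]) auto
    also have "insert (?f z) (insert Pinf (?f ` B)) = insert Pinf (?f ` insert z B)"
      by auto
    finally show ?thesis .
  qed
  then show ?thesis using fin unfolding val_independent_def by simp
qed

lemma val_independent_span_value:
  assumes B: "val_independent v K B" and w: "w \<in> Kspan K B" "w \<noteq> 0"
  shows "\<exists>b\<in>B. \<exists>\<gamma>\<in>value_group v K. v w = v b + Fin \<gamma>"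
proof -
  have fin: "finite B" using B by (rule val_independent_finite)
  obtain c where c: "c ` B \<subseteq> K" and wc: "w = (\<Sum>b\<in>B. c b * b)"
    using w unfolding Kspan_eq_sums[OF subfield fin] by blast
  have "v w = Min (insert Pinf ((\<lambda>b. v (c b * b)) ` B))"
    using B c unfolding wc val_independent_def by blast
  also have "\<dots> \<in> insert Pinf ((\<lambda>b. v (c b * b)) ` B)"
    using fin by (intro Min_in) auto
  finally have "v w \<in> insert Pinf ((\<lambda>b. v (c b * b)) ` B)" .
  moreover have "v w \<noteq> Pinf" using w val_eq_Pinf_iff by simp
  ultimately obtain b where b: "b \<in> B" "v w = v (c b * b)" by blast
  then have "c b \<noteq> 0" using \<open>v w \<noteq> Pinf\<close> by (auto simp: val_zero)
  then obtain \<gamma> where "v (c b) = Fin \<gamma>" using val_finite by blast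
  then have "\<gamma> \<in> value_group v K" "v w = v b + Fin \<gamma>"
    using b c \<open>c b \<noteq> 0\<close> by (auto simp: value_group_def val_mult add.commute)
  then show ?thesis using b(1) by blast
qed

end

locale decomposable_extension = valued_extension +
  assumes decompose: "\<forall>y. \<exists>x a. a \<in> K \<and> y = x + a \<and> abs_val_gt v K x"
begin

lemma exists_K_approximation:
  assumes y: "v y = Fin \<gamma>" "\<gamma> \<in> value_group v K"
  shows "\<exists>a\<in>K. \<forall>\<delta>\<in>value_group v K. Fin \<delta> < v (y - a)"
proof -
  obtain x a where a: "a \<in> K" and yxa: "y = x + a" and x: "abs_val_gt v K x"
    using decompose by blast
  have "\<not> (\<forall>\<delta>\<in>value_group v K. v x < Fin \<delta>)"
  proof
    assume small: "\<forall>\<delta>\<in>value_group v K. v x < Fin \<delta>"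
    have "v x < v a"
    proof (cases "a = 0")
      case True
      have "v x < Fin \<gamma>" using small y by blast
      then show ?thesis using True by (simp add: val_zero less_le_trans)
    next
      case False
      then obtain g where "v a = Fin g" using val_finite by blast
      then show ?thesis using small a False unfolding value_group_def by auto
    qed
    then have "v y = v x" using yxa val_add_eq_left by simp
    then show False using small y by auto
  qed
  then have "\<forall>\<delta>\<in>value_group v K. Fin \<delta> < v x" using x unfolding abs_val_gt_def by blast
  moreover have "x = y - a" using yxa by simp
  ultimately show ?thesis using a by blast
qed

lemma exists_far_multiple:
  assumes w: "w \<noteq> 0" and yw: "v y = v w"
  shows "\<exists>a\<in>K. \<forall>\<delta>\<in>value_group v K. v w + Fin \<delta> < v (y - a * w)"
proof -
  obtain \<omega> where \<omega>: "v w = Fin \<omega>" using val_finite w by blast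
  have "y / w \<noteq> 0" using yw \<omega> w by (auto simp: val_zero)
  then obtain k where k: "v (y / w) = Fin k" using val_finite by blast
  have "Fin \<omega> = Fin (k + \<omega>)" using val_mult[of "y / w" w] yw \<omega> k w by simp
  then have "v (y / w) = Fin 0" using k by simp
  then obtain a where a: "a \<in> K" and far: "\<forall>\<delta>\<in>value_group v K. Fin \<delta> < v (y / w - a)"
    using exists_K_approximation zero_in_value_group by blast
  have "y - a * w = (y / w - a) * w" using w by (simp add: field_simps)
  then have "v (y - a * w) = Fin \<omega> + v (y / w - a)" using val_mult \<omega> by (simp add: add.commute)
  then have "v w + Fin \<delta> < v (y - a * w)" if "\<delta> \<in> value_group v K" for \<delta>
    using far that \<omega> Fin_add_less_cancel[of \<omega> "Fin \<delta>"] by simp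
  then show ?thesis using a by blast
qed

lemma val_reach_shrinks:
  assumes B: "val_independent v K B" and y: "\<not> val_orthogonal B y"
  shows "\<exists>u\<in>Kspan K B. val_reach B (y - u) \<subset> val_reach B y"
proof -
  have fin: "finite B" using B by (rule val_independent_finite)
  obtain w where w: "w \<in> Kspan K B" and ne: "v (y + w) \<noteq> min (v y) (v w)"
    using y unfolding val_orthogonal_def by blast
  have yw: "v y = v w" using ne val_add_eq_min by blast
  have "w \<noteq> 0" using ne by (auto simp: val_zero)
  then obtain b \<gamma> where b: "b \<in> B" "\<gamma> \<in> value_group v K" and wb: "v w = v b + Fin \<gamma>"
    using val_independent_span_value[OF B w] by blast
  have "b \<noteq> 0"
  proof
    assume "b = 0"
    then have "v w = Pinf" using wb by (simp add: val_zero)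
    then show False using \<open>w \<noteq> 0\<close> val_eq_Pinf_iff by blast
  qed
  then obtain \<beta> where \<beta>: "v b = Fin \<beta>" using val_finite by blast
  obtain a where a: "a \<in> K" and far: "\<forall>\<delta>\<in>value_group v K. v w + Fin \<delta> < v (y - a * w)"
    using exists_far_multiple[OF \<open>w \<noteq> 0\<close> yw] by blast
  have "v y < v (y - a * w)"
    using far[rule_format, OF zero_in_value_group] yw by (simp flip: zero_extended_def)
  then have "v y \<le> e" if "v (y - a * w) \<le> e" for e
    using that by (rule less_le_trans[THEN less_imp_le])
  then have "val_reach B (y - a * w) \<subseteq> val_reach B y"
    unfolding val_reach_def by blast
  moreover have "b \<in> val_reach B y" using b yw wb unfolding val_reach_def by auto
  moreover have "b \<notin> val_reach B (y - a * w)"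
  proof
    assume "b \<in> val_reach B (y - a * w)"
    then obtain \<delta> where \<delta>: "\<delta> \<in> value_group v K" "v (y - a * w) \<le> v b + Fin \<delta>"
      unfolding val_reach_def by blast
    have "v b + Fin \<delta> = v w + Fin (\<delta> - \<gamma>)" using wb \<beta> by simp
    moreover have "v w + Fin (\<delta> - \<gamma>) < v (y - a * w)"
      using far diff_in_value_group[OF \<delta>(1) b(2)] by blast
    ultimately show False using \<delta>(2) by simp
  qed
  moreover have "a * w \<in> Kspan K B" using Kspan_smult[OF subfield fin w a] .
  ultimately show ?thesis by blast
qed

lemma exists_orthogonal_remainder:
  assumes B: "val_independent v K B"
  shows "\<exists>u\<in>Kspan K B. val_orthogonal B (y - u)"
proof (induction "card (val_reach B y)" arbitrary: y rule: less_induct)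
  case less
  have fin: "finite B" using B by (rule val_independent_finite)
  show ?case
  proof (cases "val_orthogonal B y")
    case True
    then show ?thesis using zero_in_Kspan by force
  next
    case False
    then obtain u where u: "u \<in> Kspan K B" and shrink: "val_reach B (y - u) \<subset> val_reach B y"
      using val_reach_shrinks[OF B] by blast
    have "finite (val_reach B y)" using fin unfolding val_reach_def by simp
    then have "card (val_reach B (y - u)) < card (val_reach B y)"
      using shrink by (rule psubset_card_mono)
    then obtain u' where u': "u' \<in> Kspan K B" "val_orthogonal B (y - u - u')"
      using less by blast
    have "u + u' \<in> Kspan K B" using Kspan_add[OF subfield fin u u'(1)] .
    then show ?thesis using u'(2) by (metis diff_diff_eq)
  qed
qed

lemma exists_val_independent_spanning:
  assumes "finite F"
  shows "\<exists>B. val_independent v K B \<and> Kspan K B = Kspan K F"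
  using assms
proof (induction F rule: finite_induct)
  case empty
  have "val_independent v K {}" by (simp add: val_independent_def val_zero)
  then show ?case by blast
next
  case (insert y F)
  then obtain B where B: "val_independent v K B" and span: "Kspan K B = Kspan K F" by blast
  have fin: "finite B" using B by (rule val_independent_finite)
  obtain u where u: "u \<in> Kspan K B" and z: "val_orthogonal B (y - u)"
    using exists_orthogonal_remainder[OF B] by blast
  have "Kspan K (insert (y - u) B) = Kspan K (insert y F)"
    using Kspan_insert_diff[OF subfield fin u] Kspan_insert_cong[OF subfield fin insert(1) span]
    by simp
  then show ?case using val_independent_insert[OF B z] by blast
qed

lemma extension_vs_defectless: "vs_defectless v K"
  unfolding vs_defectless_def using exists_val_independent_spanning by blast

end

theorem lemma5p12:
  fixes v :: "'b::field \<Rightarrow> 'g::linordered_ab_group_add extended"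
    and K :: "'b set"
  assumes "valuation v"
    and "subfield K"
    and "\<forall>y. \<exists>x a. a \<in> K \<and> y = x + a \<and> abs_val_gt v K x"
  shows "vs_defectless v K"
proof -
  interpret decomposable_extension v K
    by unfold_locales (fact assms)+
  show ?thesis by (fact extension_vs_defectless)
qed

end
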